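(* Let $(\mathcal M,\mathrm d_{\mathcal M})$ be a metric space, $k\ge1$, and $Y=y_1,\dots,y_{k+1}\in\mathcal M^{k+1}$. Let $D=\min_{1\le i\le k}\mathrm d_{\mathcal M}(y_i,y_{i+1})$, let $i^*\in\{1,\dots,k\}$ be an index with $\mathrm d_{\mathcal M}(y_{i^*},y_{i^*+1})=D$, and let $Y'\in\mathcal M^k$ be the curve obtained from $Y$ by deleting $y_{i^*}$. Then $\mathrm d_{dF}(Y,Y')\le D$, and $Y'$ is a $2$-approximate $k$-simplification of $Y$.
   Context: A curve of complexity $m$ in a metric space $(\mathcal M,\mathrm d_{\mathcal M})$ is a sequence $p=p_1,\dots,p_m$ of points of $\mathcal M$; $\mathcal M^m$ denotes the set of such curves. For $p\in\mathcal M^m$ and $q\in\mathcal M^k$, a traversal of $p$ and $q$ is a sequence of index pairs $(i_1,j_1),\dots,(i_t,j_t)$ with $(i_1,j_1)=(1,1)$, $(i_t,j_t)=(m,k)$, and for every $u<t$: $i_{u+1}-i_u\in\{0,1\}$, $j_{u+1}-j_u\in\{0,1\}$ and $(i_{u+1}-i_u)+(j_{u+1}-j_u)\ge 1$. Its cost is $\max_u \mathrm d_{\mathcal M}(p_{i_u},q_{j_u})$. The discrete Fréchet distance $\mathrm d_{dF}(p,q)$ is the minimum cost over all traversals of $p$ and $q$. For $p\in\mathcal M^m$ and $\alpha\ge 1$, a curve $p'\in\mathcal M^k$ is an $\alpha$-approximate $k$-simplification of $p$ if $\mathrm d_{dF}(p,p')\le\alpha\,\mathrm d_{dF}(p,q)$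 for every $q\in\mathcal M^k$. *)

theory Defs
  imports Main "HOL.Real_Vector_Spaces"
begin

text \<open>Curves in a metric space are nonempty lists of points; positions are 0-based
  (list position i corresponds to the paper's index i+1).\<close>

definition traversal :: "nat \<Rightarrow> nat \<Rightarrow> (nat \<times> nat) list \<Rightarrow> bool" where
  "traversal m k T \<longleftrightarrow>
     T \<noteq> [] \<and> hd T = (0, 0) \<and> last T = (m - 1, k - 1) \<and>
     (\<forall>u. Suc u < length T \<longrightarrow>
        fst (T ! u) \<le> fst (T ! Suc u) \<and> fst (T ! Suc u) \<le> fst (T ! u) + 1 \<and>
        snd (T ! u) \<le> snd (T ! Suc u) \<and> snd (T ! Suc u) \<le> snd (T ! u) + 1 \<and>
        T ! u \<noteq> T ! Suc u)"

definition traversal_cost :: "'a::metric_space list \<Rightarrow> 'a list \<Rightarrow> (nat \<times> nat) list \<Rightarrow> real" where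
  "traversal_cost p q T = Max {dist (p ! fst (T ! u)) (q ! snd (T ! u)) | u. u < length T}"

definition dfrechet :: "'a::metric_space list \<Rightarrow> 'a list \<Rightarrow> real" where
  "dfrechet p q = Inf {traversal_cost p q T | T. traversal (length p) (length q) T}"

definition approx_simplification ::
    "real \<Rightarrow> nat \<Rightarrow> 'a::metric_space list \<Rightarrow> 'a list \<Rightarrow> bool" where
  "approx_simplification \<alpha> k p p' \<longleftrightarrow>
     length p' = k \<and>
     (\<forall>q::'a list. length q = k \<longrightarrow> dfrechet p p' \<le> \<alpha> * dfrechet p q)"

end

theory Submission
  imports Defs
begin

text \<open>Deleting the vertex \<open>y\<^sub>i\<^sub>*\<close> costs at most \<open>D\<close>: traverse both curves in lockstep and
  let the shorter one wait at \<open>y\<^sub>i\<^sub>*\<^sub>+\<^sub>1\<close> while the longer one visits \<open>y\<^sub>i\<^sub>*\<close>. Conversely, any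
  traversal of a curve with \<open>k + 1\<close> vertices and one with \<open>k\<close> vertices must, by pigeonhole,
  advance on the longer curve alone at some step, from \<open>y\<^sub>i\<close> to \<open>y\<^sub>i\<^sub>+\<^sub>1\<close> against one fixed
  point \<open>q\<^sub>j\<close>; the triangle inequality then shows that its cost is at least
  \<open>d(y\<^sub>i, y\<^sub>i\<^sub>+\<^sub>1) / 2 \<ge> D / 2\<close>.\<close>

lemma traversal_cost_ge:
  assumes "u < length T"
  shows "dist (p ! fst (T ! u)) (q ! snd (T ! u)) \<le> traversal_cost p q T"
  unfolding traversal_cost_def using assms by (intro Max_ge) auto

lemma traversal_cost_le:
  assumes "T \<noteq> []" and "\<And>u. u < length T \<Longrightarrow> dist (p ! fst (T ! u)) (q ! snd (T ! u)) \<le> c"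
  shows "traversal_cost p q T \<le> c"
  unfolding traversal_cost_def using assms by (subst Max_le_iff) auto

lemma traversal_cost_nonneg:
  assumes "T \<noteq> []"
  shows "0 \<le> traversal_cost p q T"
  using traversal_cost_ge[of 0 T p q] assms zero_le_dist by (meson length_greater_0_conv order_trans)

lemma traversal_staircase:
  assumes "1 \<le> m" and "1 \<le> n"
  shows "traversal m n (map (\<lambda>t. (min t (m - 1), t - (m - 1))) [0..<m + n - 1])"
  using assms unfolding traversal_def by (auto simp: hd_map last_map hd_upt)

lemma dfrechet_le_traversal_cost:
  assumes "traversal (length p) (length q) T"
  shows "dfrechet p q \<le> traversal_cost p q T"
proof -
  have "bdd_below {traversal_cost p q T | T. traversal (length p) (length q) T}"
    unfolding bdd_below_def traversal_def using traversal_cost_nonneg by blast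
  then show ?thesis unfolding dfrechet_def using assms by (intro cInf_lower) auto
qed

lemma dfrechet_ge:
  assumes "p \<noteq> []" and "q \<noteq> []"
    and "\<And>T. traversal (length p) (length q) T \<Longrightarrow> c \<le> traversal_cost p q T"
  shows "c \<le> dfrechet p q"
proof -
  have "1 \<le> length p" "1 \<le> length q" using assms(1,2) by (simp_all add: Suc_le_eq)
  then have "{traversal_cost p q T | T. traversal (length p) (length q) T} \<noteq> {}"
    using traversal_staircase by (metis (mono_tags, lifting) empty_iff mem_Collect_eq)
  then show ?thesis unfolding dfrechet_def using assms(3) by (intro cInf_greatest) auto
qed

lemma dfrechet_delete_vertex_le:
  fixes p :: "'a::metric_space list"
  assumes "Suc i < length p"
  shows "dfrechet p (take i p @ drop (Suc i) p) \<le> dist (p ! i) (p ! Suc i)"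
proof -
  define p' where "p' = take i p @ drop (Suc i) p"
  define T where "T = map (\<lambda>u. (u, if u \<le> i then u else u - 1)) [0..<length p]"
  have T_length: "length T = length p" unfolding T_def by simp
  have T_nth: "T ! u = (u, if u \<le> i then u else u - 1)" if "u < length p" for u
    using that unfolding T_def by simp
  have p'_nth: "p' ! j = (if j < i then p ! j else p ! Suc j)" if "j < length p - 1" for j
    using that assms unfolding p'_def by (simp add: nth_append min_def)
  have "T \<noteq> []" using assms T_length by auto
  moreover have "hd T = (0, 0)"
  proof -
    have "0 < length p" using assms by (cases p) auto
    then show ?thesis using \<open>T \<noteq> []\<close> T_nth[of 0] by (simp add: hd_conv_nth)
  qed
  moreover have "last T = (length p - 1, length p' - 1)"
    using \<open>T \<noteq> []\<close> T_nth[of "length p - 1"] assms T_length unfolding p'_def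
    by (simp add: last_conv_nth)
  moreover have "\<forall>u. Suc u < length T \<longrightarrow>
        fst (T ! u) \<le> fst (T ! Suc u) \<and> fst (T ! Suc u) \<le> fst (T ! u) + 1 \<and>
        snd (T ! u) \<le> snd (T ! Suc u) \<and> snd (T ! Suc u) \<le> snd (T ! u) + 1 \<and>
        T ! u \<noteq> T ! Suc u"
    using T_nth T_length by simp
  ultimately have "traversal (length p) (length p') T"
    unfolding traversal_def by blast
  moreover have "traversal_cost p p' T \<le> dist (p ! i) (p ! Suc i)"
  proof (rule traversal_cost_le)
    fix u assume "u < length T"
    then have u: "u < length p" using T_length by simp
    consider "u < i" | "u = i" | "i < u" by linarith
    then show "dist (p ! fst (T ! u)) (p' ! snd (T ! u)) \<le> dist (p ! i) (p ! Suc i)"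
    proof cases
      case 1
      then show ?thesis using u assms T_nth p'_nth by simp
    next
      case 2
      then show ?thesis using u assms T_nth p'_nth by simp
    next
      case 3
      then have "Suc (u - 1) = u" "\<not> u - 1 < i" by simp_all
      then show ?thesis using 3 u T_nth p'_nth[of "u - 1"] by simp
    qed
  qed fact
  ultimately show ?thesis unfolding p'_def by (meson dfrechet_le_traversal_cost order_trans)
qed

lemma traversal_fst_mono:
  assumes "traversal m n T" and "v < length T" and "u \<le> v"
  shows "fst (T ! u) \<le> fst (T ! v)"
  using assms(2,3)
proof (induction v)
  case (Suc v)
  show ?case
  proof (cases "u = Suc v")
    case False
    then have "fst (T ! u) \<le> fst (T ! v)" using Suc by simp
    also have "\<dots> \<le> fst (T ! Suc v)" using assms(1) Suc.prems unfolding traversal_def by blast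
    finally show ?thesis .
  qed simp
qed simp

lemma traversal_fst_le:
  assumes "traversal m n T" and "u < length T"
  shows "fst (T ! u) \<le> m - 1"
proof -
  have "fst (T ! u) \<le> fst (T ! (length T - 1))"
    using assms by (intro traversal_fst_mono) auto
  also have "T ! (length T - 1) = last T"
    using assms unfolding traversal_def by (auto simp: last_conv_nth)
  finally show ?thesis using assms unfolding traversal_def by simp
qed

text \<open>Without a step that advances on the first curve alone, \<open>fst \<le> snd\<close> is invariant along the
  traversal, which is impossible at its end point \<open>(m - 1, n - 1)\<close>.\<close>

lemma traversal_has_first_curve_step:
  assumes "traversal m n T" and "n < m" and "1 \<le> n"
  shows "\<exists>u. Suc u < length T \<and> fst (T ! Suc u) = fst (T ! u) + 1 \<and> snd (T ! Suc u) = snd (T ! u)"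
proof (rule ccontr)
  assume no_step: "\<not> ?thesis"
  have fst_le_snd: "fst (T ! u) \<le> snd (T ! u)" if "u < length T" for u
    using that
  proof (induction u)
    case 0
    then show ?case using assms(1) unfolding traversal_def by (simp add: hd_conv_nth[symmetric])
  next
    case (Suc u)
    have "fst (T ! u) \<le> fst (T ! Suc u) \<and> fst (T ! Suc u) \<le> fst (T ! u) + 1 \<and>
        snd (T ! u) \<le> snd (T ! Suc u) \<and> snd (T ! Suc u) \<le> snd (T ! u) + 1"
      using assms(1) Suc.prems unfolding traversal_def by blast
    then show ?case using Suc no_step by force
  qed
  have "T \<noteq> []" "last T = (m - 1, n - 1)" using assms(1) unfolding traversal_def by auto
  then have "m - 1 \<le> n - 1" using fst_le_snd[of "length T - 1"] by (simp add: last_conv_nth)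
  then show False using assms(2,3) by simp
qed

lemma min_edge_length_le_twice_dfrechet:
  fixes p q :: "'a::metric_space list"
  assumes "length p = Suc n" and "length q = n" and "1 \<le> n"
  shows "Min {dist (p ! i) (p ! (i + 1)) | i. i < n} \<le> 2 * dfrechet p q"
proof -
  let ?D = "Min {dist (p ! i) (p ! (i + 1)) | i. i < n}"
  have "?D / 2 \<le> traversal_cost p q T" if T: "traversal (length p) (length q) T" for T
  proof -
    obtain u where u: "Suc u < length T" "fst (T ! Suc u) = fst (T ! u) + 1"
        "snd (T ! Suc u) = snd (T ! u)"
      using traversal_has_first_curve_step[OF T] assms by auto
    define i where "i = fst (T ! u)"
    define j where "j = snd (T ! u)"
    have "i < n" using traversal_fst_le[OF T u(1)] u(2) assms(1) unfolding i_def by simp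
    then have "?D \<le> dist (p ! i) (p ! (i + 1))" by (intro Min_le) auto
    also have "\<dots> \<le> dist (p ! i) (q ! j) + dist (p ! (i + 1)) (q ! j)"
      by (metis dist_commute dist_triangle)
    also have "dist (p ! i) (q ! j) \<le> traversal_cost p q T"
      using traversal_cost_ge[of u T p q] u(1) unfolding i_def j_def by simp
    also have "dist (p ! (i + 1)) (q ! j) \<le> traversal_cost p q T"
      using traversal_cost_ge[of "Suc u" T p q] u unfolding i_def j_def by simp
    finally show ?thesis by simp
  qed
  then have "?D / 2 \<le> dfrechet p q" using assms by (intro dfrechet_ge) auto
  then show ?thesis by simp
qed

theorem mainTheorem9:
  fixes Y :: "'a::metric_space list" and k istar :: nat and D :: real
  assumes "k \<ge> 1"
    and "length Y = k + 1"
    and "D = Min {dist (Y ! i) (Y ! (i + 1)) | i. i < k}"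
    and "istar < k"
    and "dist (Y ! istar) (Y ! (istar + 1)) = D"
  shows "dfrechet Y (take istar Y @ drop (Suc istar) Y) \<le> D \<and>
         approx_simplification 2 k Y (take istar Y @ drop (Suc istar) Y)"
proof -
  let ?Y' = "take istar Y @ drop (Suc istar) Y"
  have close: "dfrechet Y ?Y' \<le> D"
    using dfrechet_delete_vertex_le[of istar Y] assms(2,4,5) by simp
  have "dfrechet Y ?Y' \<le> 2 * dfrechet Y q" if "length q = k" for q :: "'a list"
    using close min_edge_length_le_twice_dfrechet[of Y k q] assms(1-3) that by simp
  moreover have "length ?Y' = k" using assms(2,4) by simp
  ultimately show ?thesis using close unfolding approx_simplification_def by blast
qed

end
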